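(* Let $\Sigma$ be an alphabet with $|\Sigma|\geq 3$ and let $T=U\cdot P\cdot V$ be a string over $\Sigma$ such that $P$ is a non-empty string occurring exactly once in $T$ and $|U|,|V|<|P|$. Then there exists a string $P'$ over $\Sigma$ with $d_H(P,P')=1$ such that $T'=U\cdot P'\cdot V$ has no occurrence of $P$.
   Context: $\cdot$ denotes concatenation; $d_H$ is the Hamming distance between strings of equal length. *)

theory Defs
  imports Main
begin

definition occurs_at :: "'a list \<Rightarrow> 'a list \<Rightarrow> nat \<Rightarrow> bool" where
  "occurs_at P T i \<longleftrightarrow> i + length P \<le> length T \<and> take (length P) (drop i T) = P"

definition occ :: "'a list \<Rightarrow> 'a list \<Rightarrow> nat set" where
  "occ P T = {i. occurs_at P T i}"

definition hamming :: "'a list \<Rightarrow> 'a list \<Rightarrow> nat" where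
  "hamming xs ys = card {i. i < length xs \<and> xs ! i \<noteq> ys ! i}"

end

theory Submission
  imports Defs
begin

(* Counting argument. There are at least 2|P| substitutions of one letter of P by another letter
   of \<Sigma>. If each of them created an occurrence of P in U P' V, that occurrence could not start
   at |U| (as P' \<noteq> P), so it starts at one of the |U| + |V| < 2|P| other possible positions.
   But a new occurrence at a position i, absent from T, determines the substitution: the changed
   position is the mismatch between P and the window of T at i, and the new letter is the letter
   of P there. So the substitutions inject into the positions, a contradiction. *)

lemma occurs_at_nth:
  "occurs_at P T i \<longleftrightarrow> i + length P \<le> length T \<and> (\<forall>t<length P. T ! (i + t) = P ! t)"
  unfolding occurs_at_def by (auto simp: list_eq_iff_nth_eq)

lemma occurs_at_list_update_unique:
  assumes "occurs_at P (T[j1 := c1]) i" and "occurs_at P (T[j2 := c2]) i"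
    and "\<not> occurs_at P T i"
  shows "j1 = j2 \<and> c1 = c2"
proof -
  have len: "i + length P \<le> length T"
    using assms(1) by (simp add: occurs_at_nth)
  then obtain t where t: "t < length P" "T ! (i + t) \<noteq> P ! t"
    using assms(3) by (auto simp: occurs_at_nth)
  have upd1: "T[j1 := c1] ! (i + t) = P ! t" and upd2: "T[j2 := c2] ! (i + t) = P ! t"
    using assms(1,2) t(1) by (simp_all add: occurs_at_nth)
  have "i + t = j1" using upd1 t len by (cases "i + t = j1") auto
  moreover have "i + t = j2" using upd2 t len by (cases "i + t = j2") auto
  ultimately show ?thesis using upd1 upd2 t len by auto
qed

lemma card_updates_creating_occurrence_le:
  assumes "finite S"
    and "\<And>i. i \<in> S \<Longrightarrow> \<not> occurs_at P T i"
    and "\<And>j c. (j, c) \<in> C \<Longrightarrow> \<exists>i\<in>S. occurs_at P (T[j := c]) i"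
  shows "card C \<le> card S"
proof -
  define pos where "pos jc = (SOME i. i \<in> S \<and> occurs_at P (T[fst jc := snd jc]) i)" for jc
  have pos: "pos jc \<in> S \<and> occurs_at P (T[fst jc := snd jc]) (pos jc)" if "jc \<in> C" for jc
  proof -
    have "\<exists>i. i \<in> S \<and> occurs_at P (T[fst jc := snd jc]) i"
      using assms(3)[of "fst jc" "snd jc"] that by auto
    then show ?thesis unfolding pos_def by (rule someI_ex)
  qed
  have "inj_on pos C"
  proof (rule inj_onI)
    fix jc jc' assume jc: "jc \<in> C" "jc' \<in> C" and eq: "pos jc = pos jc'"
    have "\<not> occurs_at P T (pos jc)" using assms(2) pos[OF jc(1)] by blast
    then have "fst jc = fst jc' \<and> snd jc = snd jc'"
      using occurs_at_list_update_unique[of P T "fst jc" "snd jc" "pos jc" "fst jc'" "snd jc'"]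
        pos[OF jc(1)] pos[OF jc(2)] eq by simp
    then show "jc = jc'" by (simp add: prod_eq_iff)
  qed
  moreover have "pos ` C \<subseteq> S" using pos by blast
  ultimately show ?thesis using assms(1) by (rule card_inj_on_le)
qed

lemma card_Sigma_Diff_singleton_ge:
  assumes "finite A" and "finite \<Sigma>"
  shows "card A * (card \<Sigma> - 1) \<le> card (Sigma A (\<lambda>j. \<Sigma> - {f j}))"
proof -
  have "card A * (card \<Sigma> - 1) = (\<Sum>j\<in>A. card \<Sigma> - 1)" by simp
  also have "\<dots> \<le> (\<Sum>j\<in>A. card (\<Sigma> - {f j}))"
    by (intro sum_mono) (metis card_Diff_singleton_if diff_le_self order_refl)
  also have "\<dots> = card (Sigma A (\<lambda>j. \<Sigma> - {f j}))"
    using assms by simp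
  finally show ?thesis .
qed

lemma hamming_list_update:
  assumes "k < length P" and "c \<noteq> P ! k"
  shows "hamming P (P[k := c]) = 1"
proof -
  have "{i. i < length P \<and> P ! i \<noteq> P[k := c] ! i} = {k}"
    using assms by (auto simp: nth_list_update)
  then show ?thesis unfolding hamming_def by simp
qed

lemma occurs_at_middle_iff:
  assumes "length P' = length P"
  shows "occurs_at P (U @ P' @ V) (length U) \<longleftrightarrow> P' = P"
  using assms unfolding occurs_at_def by simp

lemma occurs_at_middle_other_pos:
  assumes "occurs_at P (U @ P' @ V) i" and "length P' = length P" and "P' \<noteq> P"
  shows "i \<in> {..length U + length V} - {length U}"
  using assms occurs_at_middle_iff[OF assms(2)] unfolding occurs_at_def by auto

theorem lemma7:
  fixes \<Sigma> :: "'a set" and U P V :: "'a list"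
  assumes "finite \<Sigma>" and "card \<Sigma> \<ge> 3"
    and "set (U @ P @ V) \<subseteq> \<Sigma>"
    and "P \<noteq> []"
    and "card (occ P (U @ P @ V)) = 1"
    and "length U < length P" and "length V < length P"
  shows "\<exists>P'. set P' \<subseteq> \<Sigma> \<and> length P' = length P \<and> hamming P P' = 1
              \<and> occ P (U @ P' @ V) = {}"
proof (rule ccontr)
  assume no_P': "\<not> ?thesis"
  define T where "T = U @ P @ V"
  define C where "C = Sigma {length U..<length U + length P} (\<lambda>j. \<Sigma> - {T ! j})"
  define S where "S = {..length U + length V} - {length U}"
  have "occ P T = {length U}"
    using assms(5) occurs_at_middle_iff[of P P U V]
    unfolding T_def occ_def by (metis card_1_singletonE singletonD mem_Collect_eq)
  then have not_in_T: "\<not> occurs_at P T i" if "i \<in> S" for i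
    using that unfolding S_def occ_def by auto
  have "\<exists>i\<in>S. occurs_at P (T[j := c]) i" if jc: "(j, c) \<in> C" for j c
  proof -
    obtain k where j: "j = length U + k" and k: "k < length P"
      using jc unfolding C_def by (intro that[of "j - length U"]) auto
    have c: "c \<in> \<Sigma>" "c \<noteq> P ! k"
      using jc unfolding C_def T_def j by (auto simp: nth_append)
    have upd: "T[j := c] = U @ P[k := c] @ V"
      using k unfolding T_def j by (simp add: list_update_append)
    have "set (P[k := c]) \<subseteq> \<Sigma>"
      using assms(3) c(1) set_update_subset_insert[of P k c] by auto
    with no_P' k c obtain i where i: "occurs_at P (T[j := c]) i"
      using hamming_list_update unfolding upd occ_def by fastforce
    have "P[k := c] \<noteq> P" using k c by (metis nth_list_update_eq)
    with i have "i \<in> S"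
      using occurs_at_middle_other_pos[of P U "P[k := c]" V i] unfolding upd S_def by simp
    with i show ?thesis by blast
  qed
  then have "card C \<le> card S"
    using not_in_T by (intro card_updates_creating_occurrence_le) (auto simp: S_def)
  moreover have "length P * (card \<Sigma> - 1) \<le> card C"
    using card_Sigma_Diff_singleton_ge[OF finite_atLeastLessThan assms(1),
        of "length U" "length U + length P" "(!) T"]
    by (simp add: C_def)
  moreover have "length P * 2 \<le> length P * (card \<Sigma> - 1)"
    using assms(2) by (intro mult_le_mono2) linarith
  ultimately show False using assms(6,7) by (simp add: S_def)
qed

end
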